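(* Let $\Bbbk$ be an algebraically closed field with $\mathrm{char}(\Bbbk)\neq 2$, let $n\ge1$, and let $\mu=(\mu_{ij})$ with $\mu_{ij}\in\Bbbk^\times$, $\mu_{ij}\mu_{ji}=1$, $\mu_{ii}=1$. Let $\Phi:\mathbb P^{n-1}\times\mathbb P^{n-1}\to\mathbb P(M^\mu(n,\Bbbk))$ be given by $\Phi(a,b)=(a_ib_j+\mu_{ij}a_jb_i)_{i,j=1}^n$ for $a=(a_1,\dots,a_n)$, $b=(b_1,\dots,b_n)$. Then the image of $\Phi$ equals $\{M\in\mathbb P(M^\mu(n,\Bbbk)) : \mu\text{-rank}(M)\le 2\}$.
   Context: $S$ is the $\Bbbk$-algebra on generators $z_1,\dots,z_n$ with relations $z_jz_i=\mu_{ij}z_iz_j$ for all $i,j$. $M^\mu(n,\Bbbk)$ is the vector space of $\mu$-symmetric matrices, i.e. $M\in M(n,\Bbbk)$ with $M_{ij}=\mu_{ij}M_{ji}$ for all $i,j$. The map $\tau:\mathbb P(M^\mu(n,\Bbbk))\to\mathbb P(S_2)$ is $\tau(M)=z^TMz=\sum_{i,j}M_{ij}z_iz_j$ where $z=(z_1,\dots,z_n)^T$. For $Q\in S_2$: $\mu$-rank$(Q)=0$ if $Q=0$; $\mu$-rank$(Q)=1$ if $Q=L^2$ for some nonzero $L\in S_1$; $\mu$-rank$(Q)=2$ if $Q$ is not of the form $L^2$ with $L\in S_1\setminus\{0\}$ but $Q=L_1L_2$ with $L_1,L_2\in S_1\setminus\{0\}$. For $M\in\mathbb P(M^\mu(n,\Bbbk))$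 with $\mu$-rank$(\tau(M))\le2$, $\mu$-rank$(M)$ is defined as $\mu$-rank$(\tau(M))$; thus "$\mu$-rank$(M)\le 2$" means $\tau(M)=L_1L_2$ for some nonzero $L_1,L_2\in S_1$. *)

theory Defs
  imports "HOL-Computational_Algebra.Polynomial"
begin

definition alg_closed :: "'a::field itself \<Rightarrow> bool" where
  "alg_closed _ \<longleftrightarrow> (\<forall>p :: 'a poly. degree p \<ge> 1 \<longrightarrow> (\<exists>x. poly p x = 0))"

(* Indices 1..n are modelled by a finite type 'n with CARD('n) = n (n >= 1 automatic).
   mu :: 'n => 'n => 'a is the matrix (mu_ij). *)

definition mu_symmetric :: "('n \<Rightarrow> 'n \<Rightarrow> 'a::field) \<Rightarrow> ('n \<Rightarrow> 'n \<Rightarrow> 'a) \<Rightarrow> bool" where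
  "mu_symmetric mu M \<longleftrightarrow> (\<forall>i j. M i j = mu i j * M j i)"

(* Degree-2 part S_2 of S = k<z_1..z_n>/(z_j z_i - mu_ij z_i z_j).
   An element of the free algebra of degree 2 is a coefficient array c with
   c i j the coefficient of the word z_i z_j.  Two such are equal in S_2 iff
   their difference lies in the span of the relations z_j z_i - mu_ij z_i z_j,
   i.e. c - d = sum_{i,j} t_ij (z_j z_i - mu_ij z_i z_j) for some scalars t. *)
definition s2_eq :: "('n::finite \<Rightarrow> 'n \<Rightarrow> 'a::field) \<Rightarrow> ('n \<Rightarrow> 'n \<Rightarrow> 'a) \<Rightarrow> ('n \<Rightarrow> 'n \<Rightarrow> 'a) \<Rightarrow> bool" where
  "s2_eq mu c d \<longleftrightarrow> (\<exists>t :: 'n \<Rightarrow> 'n \<Rightarrow> 'a. \<forall>p q. c p q - d p q = t q p - mu p q * t p q)"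

(* product in S of two degree-1 elements L1 = sum a_i z_i, L2 = sum b_j z_j, as a word-coefficient array *)
definition s1_mult :: "('n \<Rightarrow> 'a::field) \<Rightarrow> ('n \<Rightarrow> 'a) \<Rightarrow> ('n \<Rightarrow> 'n \<Rightarrow> 'a)" where
  "s1_mult a b = (\<lambda>i j. a i * b j)"

(* tau(M) = z^T M z = sum_{i,j} M_ij z_i z_j, as a word-coefficient array *)
definition tau :: "('n \<Rightarrow> 'n \<Rightarrow> 'a::field) \<Rightarrow> ('n \<Rightarrow> 'n \<Rightarrow> 'a)" where
  "tau M = (\<lambda>i j. M i j)"

definition mu_rank_le2 :: "('n::finite \<Rightarrow> 'n \<Rightarrow> 'a::field) \<Rightarrow> ('n \<Rightarrow> 'n \<Rightarrow> 'a) \<Rightarrow> bool" where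
  "mu_rank_le2 mu M \<longleftrightarrow> (\<exists>L1 L2. (\<exists>i. L1 i \<noteq> 0) \<and> (\<exists>i. L2 i \<noteq> 0) \<and> s2_eq mu (tau M) (s1_mult L1 L2))"

definition Phi :: "('n \<Rightarrow> 'n \<Rightarrow> 'a::field) \<Rightarrow> ('n \<Rightarrow> 'a) \<Rightarrow> ('n \<Rightarrow> 'a) \<Rightarrow> ('n \<Rightarrow> 'n \<Rightarrow> 'a)" where
  "Phi mu a b = (\<lambda>i j. a i * b j + mu i j * a j * b i)"

end

theory Submission
  imports Defs
begin

text \<open>The \<open>\<mu>\<close>-symmetrization \<open>c\<^sub>p\<^sub>q + \<mu>\<^sub>p\<^sub>q c\<^sub>q\<^sub>p\<close> of a quadratic word-coefficient array
  annihilates the relations \<open>z\<^sub>j z\<^sub>i - \<mu>\<^sub>i\<^sub>j z\<^sub>i z\<^sub>j\<close>, so it is well defined on \<open>S\<^sub>2\<close>.  It sends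
  \<open>L\<^sub>1 L\<^sub>2\<close> to \<open>\<Phi>(L\<^sub>1, L\<^sub>2)\<close> and a \<open>\<mu>\<close>-symmetric \<open>M\<close> to \<open>2M\<close>; hence \<open>\<tau>(M) = L\<^sub>1 L\<^sub>2\<close> forces
  \<open>M = \<Phi>(L\<^sub>1, L\<^sub>2)/2\<close>.  Conversely, \<open>\<Phi>(a, b)\<close> represents \<open>2 (a\<cdot>z)(b\<cdot>z)\<close> in \<open>S\<^sub>2\<close>.\<close>

definition mu_symmetrize :: "('n \<Rightarrow> 'n \<Rightarrow> 'a::field) \<Rightarrow> ('n \<Rightarrow> 'n \<Rightarrow> 'a) \<Rightarrow> ('n \<Rightarrow> 'n \<Rightarrow> 'a)" where
  "mu_symmetrize mu c = (\<lambda>p q. c p q + mu p q * c q p)"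

lemma Phi_eq_mu_symmetrize: "Phi mu a b = mu_symmetrize mu (s1_mult a b)"
  by (simp add: Phi_def mu_symmetrize_def s1_mult_def fun_eq_iff algebra_simps)

lemma Phi_scale_left: "Phi mu (\<lambda>k. c * a k) b = (\<lambda>i j. c * Phi mu a b i j)"
  by (simp add: Phi_def fun_eq_iff algebra_simps)

lemma mu_symmetric_mu_symmetrize:
  assumes "\<And>i j. mu i j * mu j i = 1"
  shows "mu_symmetric mu (mu_symmetrize mu c)"
  unfolding mu_symmetric_def mu_symmetrize_def
proof (intro allI)
  fix p q
  have "mu p q * (c q p + mu q p * c p q) = mu p q * c q p + (mu p q * mu q p) * c p q"
    by (simp add: algebra_simps)
  then show "c p q + mu p q * c q p = mu p q * (c q p + mu q p * c p q)"
    using assms[of p q] by simp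
qed

lemma mu_symmetrize_mu_symmetric:
  assumes "mu_symmetric mu M"
  shows "mu_symmetrize mu M = (\<lambda>p q. 2 * M p q)"
proof (intro ext)
  fix p q
  have "M p q = mu p q * M q p"
    using assms unfolding mu_symmetric_def by blast
  then show "mu_symmetrize mu M p q = 2 * M p q"
    by (simp add: mu_symmetrize_def algebra_simps)
qed

lemma s2_eq_mu_symmetrize: "s2_eq mu (mu_symmetrize mu c) (\<lambda>p q. 2 * c p q)"
  unfolding s2_eq_def mu_symmetrize_def
  by (intro exI[of _ "\<lambda>p q. - c q p"] allI) (simp add: algebra_simps)

lemma mu_symmetrize_s2_eq:
  assumes "\<And>i j. mu i j * mu j i = 1" and "s2_eq mu c d"
  shows "mu_symmetrize mu c = mu_symmetrize mu d"
proof -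
  obtain t where t: "\<And>p q. c p q - d p q = t q p - mu p q * t p q"
    using assms(2) unfolding s2_eq_def by blast
  have "c p q + mu p q * c q p = d p q + mu p q * d q p" for p q
  proof -
    have "(c p q - d p q) + mu p q * (c q p - d q p)
        = t q p - (mu p q * mu q p) * t q p"
      unfolding t by (simp add: algebra_simps)
    then show ?thesis
      using assms(1)[of p q] by (simp add: algebra_simps)
  qed
  then show ?thesis
    by (simp add: mu_symmetrize_def fun_eq_iff)
qed

lemma Phi_diag:
  assumes "mu k k = 1"
  shows "Phi mu a b k k = 2 * a k * b k"
  using assms by (simp add: Phi_def algebra_simps)

lemma Phi_nonzero:
  assumes "(2::'a::field) \<noteq> 0" and "\<And>i. mu i i = 1"
    and "a i \<noteq> 0" and "b j \<noteq> 0"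
  shows "\<exists>p q. Phi mu a b p q \<noteq> (0::'a)"
proof -
  consider "b i \<noteq> 0" | "a j \<noteq> 0" | "b i = 0" "a j = 0"
    by blast
  then show ?thesis
  proof cases
    case 1
    then have "Phi mu a b i i \<noteq> 0"
      using assms by (simp add: Phi_diag)
    then show ?thesis by blast
  next
    case 2
    then have "Phi mu a b j j \<noteq> 0"
      using assms by (simp add: Phi_diag)
    then show ?thesis by blast
  next
    case 3
    then have "Phi mu a b i j \<noteq> 0"
      using assms by (simp add: Phi_def)
    then show ?thesis by blast
  qed
qed

lemma mu_rank_le2_Phi:
  assumes "(2::'a::field) \<noteq> 0" and "\<exists>i. a i \<noteq> 0" and "\<exists>i. b i \<noteq> 0"
  shows "mu_rank_le2 mu (Phi mu a (b :: 'n::finite \<Rightarrow> 'a))"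
proof -
  have "(\<lambda>p q. 2 * s1_mult a b p q) = s1_mult (\<lambda>k. 2 * a k) b"
    by (simp add: s1_mult_def mult.assoc)
  then have s2: "s2_eq mu (tau (Phi mu a b)) (s1_mult (\<lambda>k. 2 * a k) b)"
    using s2_eq_mu_symmetrize[of mu "s1_mult a b"] by (simp only: tau_def Phi_eq_mu_symmetrize)
  have a2: "\<exists>i. 2 * a i \<noteq> 0"
    using assms(1,2) by simp
  show ?thesis
    unfolding mu_rank_le2_def by (intro exI[of _ "\<lambda>k. 2 * a k"] exI[of _ b] conjI a2 assms(3) s2)
qed

lemma mu_rank_le2_imp_Phi:
  assumes "\<And>i j. mu i j * mu j i = 1" and "(2::'a::field) \<noteq> 0"
    and "mu_symmetric mu M" and "mu_rank_le2 mu (M :: 'n::finite \<Rightarrow> 'n \<Rightarrow> 'a)"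
  obtains a b where "\<exists>i. a i \<noteq> 0" and "\<exists>i. b i \<noteq> 0"
    and "M = (\<lambda>p q. (1/2) * Phi mu a b p q)"
proof -
  obtain a b where a: "\<exists>i. a i \<noteq> 0" and b: "\<exists>i. b i \<noteq> 0"
    and "s2_eq mu (tau M) (s1_mult a b)"
    using assms(4) unfolding mu_rank_le2_def by blast
  then have "mu_symmetrize mu M = Phi mu a b"
    using mu_symmetrize_s2_eq[OF assms(1)] by (simp add: tau_def Phi_eq_mu_symmetrize)
  then have "(\<lambda>p q. 2 * M p q) = Phi mu a b"
    using mu_symmetrize_mu_symmetric[OF assms(3)] by simp
  then have "Phi mu a b p q = 2 * M p q" for p q
    by metis
  then have "M = (\<lambda>p q. (1/2) * Phi mu a b p q)"
    using assms(2) by simp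
  with a b that show ?thesis by blast
qed

theorem proposition2p5:
  fixes mu :: "'n::finite \<Rightarrow> 'n \<Rightarrow> 'k::field"
  assumes "alg_closed TYPE('k)"
    and "(2::'k) \<noteq> 0"
    and "\<And>i j. mu i j \<noteq> 0"
    and "\<And>i j. mu i j * mu j i = 1"
    and "\<And>i. mu i i = 1"
  shows "{M. \<exists>a b c. (\<exists>i. a i \<noteq> 0) \<and> (\<exists>i. b i \<noteq> 0) \<and> c \<noteq> 0 \<and> M = (\<lambda>i j. c * Phi mu a b i j)}
       = {M. mu_symmetric mu M \<and> (\<exists>i j. M i j \<noteq> 0) \<and> mu_rank_le2 mu M}"
proof (intro equalityI subsetI)
  fix M
  assume "M \<in> {M. \<exists>a b c. (\<exists>i. a i \<noteq> 0) \<and> (\<exists>i. b i \<noteq> 0) \<and> c \<noteq> 0 \<and> M = (\<lambda>i j. c * Phi mu a b i j)}"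
  then obtain a b c i j where "a i \<noteq> 0" "b j \<noteq> 0" "c \<noteq> 0"
    and "M = (\<lambda>i j. c * Phi mu a b i j)" by blast
  then have M: "M = Phi mu (\<lambda>k. c * a k) b" and ca: "c * a i \<noteq> 0"
    by (simp_all add: Phi_scale_left)
  have "mu_symmetric mu (Phi mu (\<lambda>k. c * a k) b)"
    using mu_symmetric_mu_symmetrize[OF assms(4)] by (simp add: Phi_eq_mu_symmetrize)
  moreover have "\<exists>p q. Phi mu (\<lambda>k. c * a k) b p q \<noteq> 0"
    using assms(2,5) ca \<open>b j \<noteq> 0\<close> by (rule Phi_nonzero)
  moreover have "mu_rank_le2 mu (Phi mu (\<lambda>k. c * a k) b)"
    using assms(2) ca \<open>b j \<noteq> 0\<close> by (blast intro: mu_rank_le2_Phi)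
  ultimately show "M \<in> {M. mu_symmetric mu M \<and> (\<exists>i j. M i j \<noteq> 0) \<and> mu_rank_le2 mu M}"
    unfolding M by simp
next
  fix M
  assume "M \<in> {M. mu_symmetric mu M \<and> (\<exists>i j. M i j \<noteq> 0) \<and> mu_rank_le2 mu M}"
  then have "mu_symmetric mu M" and "mu_rank_le2 mu M"
    by simp_all
  then obtain a b where a: "\<exists>i. a i \<noteq> 0" and b: "\<exists>i. b i \<noteq> 0"
    and M: "M = (\<lambda>p q. (1/2) * Phi mu a b p q)"
    by (rule mu_rank_le2_imp_Phi[OF assms(4,2)])
  have "(1/2::'k) \<noteq> 0"
    using assms(2) by simp
  with a b M show "M \<in> {M. \<exists>a b c. (\<exists>i. a i \<noteq> 0) \<and> (\<exists>i. b i \<noteq> 0) \<and> c \<noteq> 0 \<and> M = (\<lambda>i j. c * Phi mu a b i j)}"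
    by blast
qed

end
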